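(* Consider the following four sequences of groups $G_d$ acting on spaces $V_d$, each with the zero-padding maps $\gamma_d\colon V_d\to V_{d+1}$: (i) $V_d=\mathbb{R}^d$, $G_d=\mathfrak{S}_d$ permuting coordinates, $\gamma_d(x)=(x,0)$; (ii) $V_d=\mathbb{R}^{d\times k}$, $G_d=\mathfrak{S}_d$ permuting rows, $\gamma_d$ appending a zero row; (iii) $V_d$ the real symmetric $d\times d$ matrices, $G_d=\mathfrak{S}_d$ acting by $X\mapsto PXP^\top$, $\gamma_d$ appending a zero row and a zero column; (iv) $V_d=\mathbb{R}^{d\times k}$, $G_d$ generated by row permutations and right multiplication by $O(k)$ (acting by $X\mapsto PXQ$), $\gamma_d$ appending a zero row. In each case $\{(V_d,\gamma_d)\}_{d\in\mathbb{N}}$ is a consistent sequence, and for each fixed $m$, for all $d\ge D$ the restriction map $\mathbb{R}[V_{d+1}]_m^{G_{d+1}}\to\mathbb{R}[V_d]_m^{G_d}$, $f\mapsto f\circ\gamma_d$, is a linear isomorphism, where $D=m,\ m,\ 2m,\ 2m$ in cases (i), (ii), (iii), (iv) respectively. That is, the stability degree of $\{(\mathbb{R}[V_d]_m,\gamma_d)\}_{d\in\mathbb{N}}$ is at most $D$.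
   Context: A consistent sequence is a sequence of Euclidean spaces $V_d$ with a nested sequence of compact groups $G_1\subseteq G_2\subseteq\cdots$, $G_d$ acting linearly and orthogonally on $V_d$, together with linear isometries $\gamma_d\colon V_d\to V_{d+1}$ that are $G_d$-equivariant: $\gamma_d(gx)=g\gamma_d(x)$ for $x\in V_d$, $g\in G_d$ (where $G_d\subseteq G_{d+1}$ acts on $V_{d+1}$ fixing the added coordinates). $\mathbb{R}[V]_m$ is the space of real polynomials on $V$ of degree at most $m$ and $\mathbb{R}[V]_m^G$ the $G$-invariant ones. The stability degree of $\{(\mathbb{R}[V_d]_m,\gamma_d)\}$ is the smallest $D$ such that $f\mapsto f\circ\gamma_d$ restricts to an isomorphism $\mathbb{R}[V_{d+1}]_m^{G_{d+1}}\to\mathbb{R}[V_d]_m^{G_d}$ for all $d\ge D$. *)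

theory Defs
  imports Complex_Main "HOL-Combinatorics.Permutations"
begin

text \<open>Ambient model: points of V_d are real-valued functions on a coordinate type 'c
  that vanish outside a finite coordinate set C d.  Zero padding is then the natural
  embedding V_d into V_(d+1).\<close>

definition supp_mi :: "('c \<Rightarrow> nat) \<Rightarrow> 'c set" where
  "supp_mi \<alpha> = {c. \<alpha> c \<noteq> 0}"

definition monomial_fun :: "('c \<Rightarrow> nat) \<Rightarrow> ('c \<Rightarrow> real) \<Rightarrow> real" where
  "monomial_fun \<alpha> x = (\<Prod>c\<in>supp_mi \<alpha>. x c ^ \<alpha> c)"

definition mdeg :: "('c \<Rightarrow> nat) \<Rightarrow> nat" where
  "mdeg \<alpha> = (\<Sum>c\<in>supp_mi \<alpha>. \<alpha> c)"

definition poly_funs :: "('c \<Rightarrow> real) set \<Rightarrow> nat \<Rightarrow> (('c \<Rightarrow> real) \<Rightarrow> real) set" where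
  "poly_funs V m = {f. (\<forall>x. x \<notin> V \<longrightarrow> f x = 0) \<and>
     (\<exists>A coef. finite A \<and> (\<forall>\<alpha>\<in>A. finite (supp_mi \<alpha>) \<and> mdeg \<alpha> \<le> m) \<and>
        (\<forall>x\<in>V. f x = (\<Sum>\<alpha>\<in>A. coef \<alpha> * monomial_fun \<alpha> x)))}"

definition invariant_polys ::
  "('c \<Rightarrow> real) set \<Rightarrow> (('c \<Rightarrow> real) \<Rightarrow> ('c \<Rightarrow> real)) set \<Rightarrow> nat \<Rightarrow> (('c \<Rightarrow> real) \<Rightarrow> real) set" where
  "invariant_polys V G m = {f \<in> poly_funs V m. \<forall>g\<in>G. \<forall>x\<in>V. f (g x) = f x}"

definition restr :: "('c \<Rightarrow> real) set \<Rightarrow> (('c \<Rightarrow> real) \<Rightarrow> ('c \<Rightarrow> real)) \<Rightarrow>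
    (('c \<Rightarrow> real) \<Rightarrow> real) \<Rightarrow> ('c \<Rightarrow> real) \<Rightarrow> real" where
  "restr V \<gamma> f = (\<lambda>x. if x \<in> V then f (\<gamma> x) else 0)"

text \<open>Restriction R[V_(d+1)]_m^(G_(d+1)) \<rightarrow> R[V_d]_m^(G_d) is an isomorphism for all d \<ge> D
  (it is linear by construction, so bijectivity is the content).\<close>
definition stable_from ::
  "(nat \<Rightarrow> ('c \<Rightarrow> real) set) \<Rightarrow> (nat \<Rightarrow> (('c \<Rightarrow> real) \<Rightarrow> ('c \<Rightarrow> real)) set) \<Rightarrow>
   (nat \<Rightarrow> ('c \<Rightarrow> real) \<Rightarrow> ('c \<Rightarrow> real)) \<Rightarrow> nat \<Rightarrow> nat \<Rightarrow> bool" where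
  "stable_from V G \<gamma> m D \<longleftrightarrow>
     (\<forall>d\<ge>D. bij_betw (restr (V d) (\<gamma> d))
                (invariant_polys (V (Suc d)) (G (Suc d)) m) (invariant_polys (V d) (G d) m))"

definition lin_comb :: "real \<Rightarrow> ('c \<Rightarrow> real) \<Rightarrow> real \<Rightarrow> ('c \<Rightarrow> real) \<Rightarrow> ('c \<Rightarrow> real)" where
  "lin_comb a x b y = (\<lambda>c. a * x c + b * y c)"

definition subspace_in :: "'c set \<Rightarrow> ('c \<Rightarrow> real) set \<Rightarrow> bool" where
  "subspace_in C V \<longleftrightarrow> finite C \<and> (\<forall>x\<in>V. \<forall>c. c \<notin> C \<longrightarrow> x c = 0) \<and> (\<lambda>c. 0) \<in> V \<and>
     (\<forall>x\<in>V. \<forall>y\<in>V. \<forall>a b. lin_comb a x b y \<in> V)"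

definition lin_on :: "('c \<Rightarrow> real) set \<Rightarrow> (('c \<Rightarrow> real) \<Rightarrow> ('c \<Rightarrow> real)) \<Rightarrow> bool" where
  "lin_on V h \<longleftrightarrow> (\<forall>x\<in>V. \<forall>y\<in>V. \<forall>a b. h (lin_comb a x b y) = lin_comb a (h x) b (h y))"

definition ip :: "'c set \<Rightarrow> ('c \<Rightarrow> real) \<Rightarrow> ('c \<Rightarrow> real) \<Rightarrow> real" where
  "ip C x y = (\<Sum>c\<in>C. x c * y c)"

definition consistent_seq ::
  "(nat \<Rightarrow> 'c set) \<Rightarrow> (nat \<Rightarrow> ('c \<Rightarrow> real) set) \<Rightarrow>
   (nat \<Rightarrow> (('c \<Rightarrow> real) \<Rightarrow> ('c \<Rightarrow> real)) set) \<Rightarrow> (nat \<Rightarrow> ('c \<Rightarrow> real) \<Rightarrow> ('c \<Rightarrow> real)) \<Rightarrow> bool" where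
  "consistent_seq C V G \<gamma> \<longleftrightarrow>
     (\<forall>d. subspace_in (C d) (V d)) \<and>
     (\<forall>d. G d \<subseteq> G (Suc d)) \<and>
     \<comment> \<open>G d is a group of transformations of V d\<close>
     (\<forall>d. (\<exists>e\<in>G d. \<forall>x\<in>V d. e x = x) \<and>
          (\<forall>g\<in>G d. \<forall>h\<in>G d. \<exists>k\<in>G d. \<forall>x\<in>V d. k x = g (h x)) \<and>
          (\<forall>g\<in>G d. \<exists>h\<in>G d. \<forall>x\<in>V d. h (g x) = x)) \<and>
     \<comment> \<open>G d acts linearly and orthogonally on V d\<close>
     (\<forall>d. \<forall>g\<in>G d. g ` V d \<subseteq> V d \<and> lin_on (V d) g \<and>
          (\<forall>x\<in>V d. \<forall>y\<in>V d. ip (C d) (g x) (g y) = ip (C d) x y)) \<and>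
     \<comment> \<open>\<gamma> d : V d \<rightarrow> V (d+1) is a linear isometry\<close>
     (\<forall>d. \<gamma> d ` V d \<subseteq> V (Suc d) \<and> lin_on (V d) (\<gamma> d) \<and>
          (\<forall>x\<in>V d. \<forall>y\<in>V d. ip (C (Suc d)) (\<gamma> d x) (\<gamma> d y) = ip (C d) x y)) \<and>
     \<comment> \<open>equivariance\<close>
     (\<forall>d. \<forall>g\<in>G d. \<forall>x\<in>V d. \<gamma> d (g x) = g (\<gamma> d x))"

definition C1 :: "nat \<Rightarrow> nat set" where "C1 d = {..<d}"
definition V1 :: "nat \<Rightarrow> (nat \<Rightarrow> real) set" where
  "V1 d = {x. \<forall>i. d \<le> i \<longrightarrow> x i = 0}"
definition G1 :: "nat \<Rightarrow> ((nat \<Rightarrow> real) \<Rightarrow> (nat \<Rightarrow> real)) set" where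
  "G1 d = {(\<lambda>x i. x (\<sigma> i)) | \<sigma>. \<sigma> permutes {..<d}}"
definition \<gamma>1 :: "nat \<Rightarrow> (nat \<Rightarrow> real) \<Rightarrow> (nat \<Rightarrow> real)" where
  "\<gamma>1 d x = (\<lambda>i. if i < d then x i else 0)"

definition C2 :: "nat \<Rightarrow> nat \<Rightarrow> (nat \<times> nat) set" where "C2 k d = {..<d} \<times> {..<k}"
definition V2 :: "nat \<Rightarrow> nat \<Rightarrow> (nat \<times> nat \<Rightarrow> real) set" where
  "V2 k d = {X. \<forall>i j. d \<le> i \<or> k \<le> j \<longrightarrow> X (i, j) = 0}"
definition G2 :: "nat \<Rightarrow> nat \<Rightarrow> ((nat \<times> nat \<Rightarrow> real) \<Rightarrow> (nat \<times> nat \<Rightarrow> real)) set" where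
  "G2 k d = {(\<lambda>X (i, j). X (\<sigma> i, j)) | \<sigma>. \<sigma> permutes {..<d}}"
definition \<gamma>2 :: "nat \<Rightarrow> nat \<Rightarrow> (nat \<times> nat \<Rightarrow> real) \<Rightarrow> (nat \<times> nat \<Rightarrow> real)" where
  "\<gamma>2 k d X = (\<lambda>(i, j). if i < d then X (i, j) else 0)"

text \<open>(iii) symmetric d \<times> d matrices, S_d acting by X \<mapsto> P X P^T.\<close>
definition C3 :: "nat \<Rightarrow> (nat \<times> nat) set" where "C3 d = {..<d} \<times> {..<d}"
definition V3 :: "nat \<Rightarrow> (nat \<times> nat \<Rightarrow> real) set" where
  "V3 d = {X. (\<forall>i j. X (i, j) = X (j, i)) \<and> (\<forall>i j. d \<le> i \<or> d \<le> j \<longrightarrow> X (i, j) = 0)}"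
definition G3 :: "nat \<Rightarrow> ((nat \<times> nat \<Rightarrow> real) \<Rightarrow> (nat \<times> nat \<Rightarrow> real)) set" where
  "G3 d = {(\<lambda>X (i, j). X (\<sigma> i, \<sigma> j)) | \<sigma>. \<sigma> permutes {..<d}}"
definition \<gamma>3 :: "nat \<Rightarrow> (nat \<times> nat \<Rightarrow> real) \<Rightarrow> (nat \<times> nat \<Rightarrow> real)" where
  "\<gamma>3 d X = (\<lambda>(i, j). if i < d \<and> j < d then X (i, j) else 0)"

text \<open>(iv) d \<times> k matrices, S_d \<times> O(k) acting by X \<mapsto> P X Q.\<close>
definition orth :: "nat \<Rightarrow> (nat \<times> nat \<Rightarrow> real) \<Rightarrow> bool" where
  "orth k Q \<longleftrightarrow> (\<forall>a b. a < k \<longrightarrow> b < k \<longrightarrow>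
      (\<Sum>l<k. Q (l, a) * Q (l, b)) = (if a = b then 1 else 0))"
definition G4 :: "nat \<Rightarrow> nat \<Rightarrow> ((nat \<times> nat \<Rightarrow> real) \<Rightarrow> (nat \<times> nat \<Rightarrow> real)) set" where
  "G4 k d = {(\<lambda>X (i, j). if j < k then (\<Sum>l<k. X (\<sigma> i, l) * Q (l, j)) else 0) | \<sigma> Q.
              \<sigma> permutes {..<d} \<and> orth k Q}"

end

theory Submission
  imports Defs "Jordan_Normal_Form.Determinant"
begin

(* In all four cases a coordinate of V_d lies in at most r rows (r = 1 for vectors and for
   matrices with permuted rows, r = 2 for symmetric matrices), S_d permutes the rows, and in (iv)
   the extra factor O(k) acts within each row, so it commutes with permuting and zeroing rows.

   Injectivity: let F be an invariant polynomial of degree at most m on V_(d+1) that vanishes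
   on V_d.  Moving any row to the last position shows that F vanishes as soon as one row of its
   argument is zeroed, so by inclusion-exclusion only monomials touching all d + 1 rows survive
   in F.  Such a monomial has degree at least (d + 1)/r > m when d >= r m, hence F = 0.

   Surjectivity (for every d): an invariant f on V_d extends to
     F x = - sum over U properly contained in {0..d} of (-1)^|{0..d} - U| f (x_U),
   where x_U keeps the rows of x in U and moves a row missing from U to the last position.
   Every x_U lies in V_d and is a polynomial image of x, a permutation of x permutes the
   sets U, and for x in V_d the alternating sum telescopes to f x. *)

definition poly_on :: "('c \<Rightarrow> real) set \<Rightarrow> nat \<Rightarrow> (('c \<Rightarrow> real) \<Rightarrow> real) \<Rightarrow> bool" where
  "poly_on Y m f \<longleftrightarrow> (\<exists>A coef. finite A \<and> (\<forall>\<alpha>\<in>A. finite (supp_mi \<alpha>) \<and> mdeg \<alpha> \<le> m) \<and>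
     (\<forall>x\<in>Y. f x = (\<Sum>\<alpha>\<in>A. coef \<alpha> * monomial_fun \<alpha> x)))"

lemma poly_funs_iff: "f \<in> poly_funs Y m \<longleftrightarrow> (\<forall>x. x \<notin> Y \<longrightarrow> f x = 0) \<and> poly_on Y m f"
  unfolding poly_funs_def poly_on_def by blast

lemma poly_on_cong: "poly_on Y m f \<Longrightarrow> (\<And>x. x \<in> Y \<Longrightarrow> f x = g x) \<Longrightarrow> poly_on Y m g"
  unfolding poly_on_def by metis

lemma poly_on_subset: "poly_on Y m f \<Longrightarrow> Z \<subseteq> Y \<Longrightarrow> poly_on Z m f"
  unfolding poly_on_def by blast

lemma poly_on_zero: "poly_on Y m (\<lambda>x. 0)"
  unfolding poly_on_def by (rule exI[of _ "{}"]) auto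

lemma poly_on_monomial: "finite (supp_mi \<alpha>) \<Longrightarrow> mdeg \<alpha> \<le> m \<Longrightarrow> poly_on Y m (monomial_fun \<alpha>)"
  unfolding poly_on_def by (rule exI[of _ "{\<alpha>}"], rule exI[of _ "\<lambda>_. 1"]) auto

lemma poly_on_lin_comb:
  assumes "poly_on Y m f" "poly_on Y m g"
  shows "poly_on Y m (\<lambda>x. a * f x + b * g x)"
proof -
  obtain A1 c1 where A1: "finite A1" "\<forall>\<alpha>\<in>A1. finite (supp_mi \<alpha>) \<and> mdeg \<alpha> \<le> m"
    "\<forall>x\<in>Y. f x = (\<Sum>\<alpha>\<in>A1. c1 \<alpha> * monomial_fun \<alpha> x)"
    using assms(1) unfolding poly_on_def by blast
  obtain A2 c2 where A2: "finite A2" "\<forall>\<alpha>\<in>A2. finite (supp_mi \<alpha>) \<and> mdeg \<alpha> \<le> m"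
    "\<forall>x\<in>Y. g x = (\<Sum>\<alpha>\<in>A2. c2 \<alpha> * monomial_fun \<alpha> x)"
    using assms(2) unfolding poly_on_def by blast
  define c where "c \<alpha> = a * (if \<alpha> \<in> A1 then c1 \<alpha> else 0) + b * (if \<alpha> \<in> A2 then c2 \<alpha> else 0)"
    for \<alpha>
  have "a * f x + b * g x = (\<Sum>\<alpha>\<in>A1 \<union> A2. c \<alpha> * monomial_fun \<alpha> x)" if "x \<in> Y" for x
  proof -
    have "(\<Sum>\<alpha>\<in>A1. c1 \<alpha> * monomial_fun \<alpha> x) =
        (\<Sum>\<alpha>\<in>A1 \<union> A2. (if \<alpha> \<in> A1 then c1 \<alpha> else 0) * monomial_fun \<alpha> x)"
      using A1(1) A2(1) by (intro sum.mono_neutral_cong_left) auto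
    moreover have "(\<Sum>\<alpha>\<in>A2. c2 \<alpha> * monomial_fun \<alpha> x) =
        (\<Sum>\<alpha>\<in>A1 \<union> A2. (if \<alpha> \<in> A2 then c2 \<alpha> else 0) * monomial_fun \<alpha> x)"
      using A1(1) A2(1) by (intro sum.mono_neutral_cong_left) auto
    ultimately show ?thesis
      using A1(3) A2(3) that by (simp add: c_def algebra_simps sum.distrib sum_distrib_left)
  qed
  then show ?thesis
    unfolding poly_on_def using A1 A2 by (intro exI[of _ "A1 \<union> A2"] exI[of _ c]) auto
qed

lemma poly_on_diff: "poly_on Y m f \<Longrightarrow> poly_on Y m g \<Longrightarrow> poly_on Y m (\<lambda>x. f x - g x)"
  using poly_on_lin_comb[of Y m f g 1 "-1"] by simp

lemma poly_on_sum:
  assumes "finite I" "\<And>i. i \<in> I \<Longrightarrow> poly_on Y m (f i)"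
  shows "poly_on Y m (\<lambda>x. \<Sum>i\<in>I. a i * f i x)"
  using assms
proof (induction I rule: finite_induct)
  case empty
  then show ?case by (simp add: poly_on_zero)
next
  case (insert i I)
  have "poly_on Y m (\<lambda>x. a i * f i x + 1 * (\<Sum>i\<in>I. a i * f i x))"
    using insert by (intro poly_on_lin_comb) auto
  then show ?case using insert by simp
qed

lemma poly_on_compose:
  assumes "poly_on Z m f" "\<And>x. x \<in> Y \<Longrightarrow> h x \<in> Z"
    and "\<And>\<alpha>. finite (supp_mi \<alpha>) \<Longrightarrow> mdeg \<alpha> \<le> m \<Longrightarrow> poly_on Y m (\<lambda>x. monomial_fun \<alpha> (h x))"
  shows "poly_on Y m (\<lambda>x. f (h x))"
proof -
  obtain A c where A: "finite A" "\<forall>\<alpha>\<in>A. finite (supp_mi \<alpha>) \<and> mdeg \<alpha> \<le> m"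
    "\<forall>x\<in>Z. f x = (\<Sum>\<alpha>\<in>A. c \<alpha> * monomial_fun \<alpha> x)"
    using assms(1) unfolding poly_on_def by blast
  have "poly_on Y m (\<lambda>x. \<Sum>\<alpha>\<in>A. c \<alpha> * monomial_fun \<alpha> (h x))"
    using A assms(3) by (intro poly_on_sum) auto
  then show ?thesis by (rule poly_on_cong) (use A assms(2) in auto)
qed

lemma supp_mi_comp_inv:
  assumes "bij h" shows "supp_mi (\<alpha> \<circ> Hilbert_Choice.inv h) = h ` supp_mi \<alpha>"
proof -
  have "supp_mi (\<alpha> \<circ> Hilbert_Choice.inv h) = Hilbert_Choice.inv h -` supp_mi \<alpha>"
    by (auto simp: supp_mi_def)
  then show ?thesis
    using bij_vimage_eq_inv_image[OF bij_imp_bij_inv[OF assms]] inv_inv_eq[OF assms] by simp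
qed

lemma monomial_fun_comp:
  assumes "bij h" "finite (supp_mi \<alpha>)"
  shows "monomial_fun \<alpha> (x \<circ> h) = monomial_fun (\<alpha> \<circ> Hilbert_Choice.inv h) x"
    and "finite (supp_mi (\<alpha> \<circ> Hilbert_Choice.inv h))"
    and "mdeg (\<alpha> \<circ> Hilbert_Choice.inv h) = mdeg \<alpha>"
proof -
  have inj: "inj_on h (supp_mi \<alpha>)" using assms(1) by (simp add: bij_def inj_on_def)
  have inv_h: "Hilbert_Choice.inv h (h c) = c" for c using assms(1) by (simp add: bij_def)
  show "monomial_fun \<alpha> (x \<circ> h) = monomial_fun (\<alpha> \<circ> Hilbert_Choice.inv h) x"
    unfolding monomial_fun_def supp_mi_comp_inv[OF assms(1)] prod.reindex[OF inj]
    by (simp add: inv_h)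
  show "finite (supp_mi (\<alpha> \<circ> Hilbert_Choice.inv h))" using assms by (simp add: supp_mi_comp_inv)
  show "mdeg (\<alpha> \<circ> Hilbert_Choice.inv h) = mdeg \<alpha>"
    unfolding mdeg_def supp_mi_comp_inv[OF assms(1)] sum.reindex[OF inj] by (simp add: inv_h)
qed

lemma transpose_permutes_lessThan_Suc: "i < Suc d \<Longrightarrow> transpose i d permutes {..<Suc d}"
  by (rule permutes_swap_id) auto

lemma permutes_lessThan_Suc_fixing:
  "\<rho> permutes {..<Suc d} \<Longrightarrow> \<rho> d = d \<Longrightarrow> \<rho> permutes {..<d}"
  unfolding permutes_def by (metis lessThan_iff less_Suc_eq)

lemma permutes_image_subset_iff: "\<sigma> permutes S \<Longrightarrow> \<sigma> ` A \<subseteq> S \<longleftrightarrow> A \<subseteq> S"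
  by (simp add: image_subset_iff_subset_vimage permutes_vimage)

lemma permutes_image_psubset_iff:
  assumes "\<sigma> permutes S" shows "\<sigma> ` U \<subset> S \<longleftrightarrow> U \<subset> S"
proof -
  have "\<sigma> ` U = S \<longleftrightarrow> U = S"
    using permutes_image[OF assms] permutes_inj[OF assms] by (metis inj_image_eq_iff)
  then show ?thesis using permutes_image_subset_iff[OF assms] by auto
qed

lemma alternating_sum_proper_subsets:
  fixes g :: "nat set \<Rightarrow> real"
  shows "(\<Sum>U | U \<subset> {..<Suc d}. (-1) ^ card ({..<Suc d} - U) * g (U - {d})) = - g {..<d}"
proof -
  let ?N = "{..<Suc d}" and ?D = "{..<d}"
  let ?t = "\<lambda>U. (-1::real) ^ card (?N - U) * g (U - {d})"
  have split: "{U. U \<subset> ?N} = Pow ?D \<union> insert d ` (Pow ?D - {?D})"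
  proof (intro equalityI subsetI)
    fix U assume "U \<in> {U. U \<subset> ?N}"
    then have U: "U \<subseteq> ?N" "U \<noteq> ?N" by auto
    show "U \<in> Pow ?D \<union> insert d ` (Pow ?D - {?D})"
    proof (cases "d \<in> U")
      case True
      then have "U = insert d (U - {d})" "U - {d} \<in> Pow ?D - {?D}"
        using U by (auto simp: lessThan_Suc)
      then show ?thesis by blast
    next
      case False
      then show ?thesis using U by (auto simp: less_Suc_eq)
    qed
  qed (auto simp: lessThan_Suc)
  have "(\<Sum>U\<in>Pow ?D. ?t U) = (\<Sum>U\<in>Pow ?D. - ((-1) ^ card (?D - U) * g U))"
  proof (rule sum.cong)
    fix U assume "U \<in> Pow ?D"
    then have "?N - U = insert d (?D - U)" "U - {d} = U" by (auto simp: lessThan_Suc)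
    then show "?t U = - ((-1) ^ card (?D - U) * g U)" by simp
  qed simp
  also have "\<dots> = - g ?D + (\<Sum>U\<in>Pow ?D - {?D}. - ((-1) ^ card (?D - U) * g U))"
    by (subst sum.remove[of _ ?D]) auto
  finally have low: "(\<Sum>U\<in>Pow ?D. ?t U) = - g ?D - (\<Sum>U\<in>Pow ?D - {?D}. (-1) ^ card (?D - U) * g U)"
    by (simp add: sum_negf)
  have "inj_on (insert d) (Pow ?D - {?D})" unfolding inj_on_def by auto
  then have high: "(\<Sum>U\<in>insert d ` (Pow ?D - {?D}). ?t U) = (\<Sum>U\<in>Pow ?D - {?D}. (-1) ^ card (?D - U) * g U)"
  proof (simp only: sum.reindex, intro sum.cong refl)
    fix U assume "U \<in> Pow ?D - {?D}"
    then have "?N - insert d U = ?D - U" "insert d U - {d} = U" by (auto simp: lessThan_Suc)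
    then show "(?t \<circ> insert d) U = (-1) ^ card (?D - U) * g U" by simp
  qed
  have "(\<Sum>U | U \<subset> ?N. ?t U) = (\<Sum>U\<in>Pow ?D. ?t U) + (\<Sum>U\<in>insert d ` (Pow ?D - {?D}). ?t U)"
    unfolding split by (rule sum.union_disjoint) auto
  then show ?thesis unfolding low high by simp
qed

section \<open>Row systems\<close>

text \<open>A coordinate \<open>c\<close> of the ambient space lies in the finite set of rows \<open>rows c\<close>, and
  the row permutation \<open>\<sigma>\<close> moves it to \<open>rmap \<sigma> c\<close>.  The space \<open>V d\<close> consists of the
  vectors of the subspace \<open>W\<close> using only rows below \<open>d\<close>; the group \<open>G d\<close> is generated by
  the permutations of these rows together with a group \<open>H\<close> of linear maps acting within
  rows (right multiplication by \<open>O(k)\<close> in case (iv), trivial otherwise).  Since \<open>H\<close> only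
  acts on \<open>W\<close>, its group laws are only required there.\<close>

locale row_system =
  fixes rows :: "'c \<Rightarrow> nat set"
    and rmap :: "(nat \<Rightarrow> nat) \<Rightarrow> 'c \<Rightarrow> 'c"
    and W :: "('c \<Rightarrow> real) set"
    and r :: nat
    and H :: "(('c \<Rightarrow> real) \<Rightarrow> 'c \<Rightarrow> real) set"
  assumes finite_rows: "finite (rows c)"
    and card_rows: "card (rows c) \<le> r"
    and rows_rmap: "rows (rmap \<sigma> c) = \<sigma> ` rows c"
    and rmap_id: "rmap id = id"
    and rmap_comp: "rmap \<tau> \<circ> rmap \<sigma> = rmap (\<tau> \<circ> \<sigma>)"
    and rmap_fixing: "(\<And>i. i \<in> rows c \<Longrightarrow> \<sigma> i = i) \<Longrightarrow> rmap \<sigma> c = c"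
    and zero_in_W: "(\<lambda>c. 0) \<in> W"
    and lin_comb_in_W: "x \<in> W \<Longrightarrow> y \<in> W \<Longrightarrow> lin_comb a x b y \<in> W"
    and comp_rmap_in_W: "x \<in> W \<Longrightarrow> x \<circ> rmap \<sigma> \<in> W"
    and cutoff_in_W: "x \<in> W \<Longrightarrow> (\<lambda>c. if rows c \<subseteq> U then x c else 0) \<in> W"
    and H_in_W: "h \<in> H \<Longrightarrow> x \<in> W \<Longrightarrow> h x \<in> W"
    and H_comp_rmap: "h \<in> H \<Longrightarrow> h (x \<circ> rmap \<sigma>) = h x \<circ> rmap \<sigma>"
    and H_cutoff: "h \<in> H \<Longrightarrow>
      h (\<lambda>c. if rows c \<subseteq> U then x c else 0) = (\<lambda>c. if rows c \<subseteq> U then h x c else 0)"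
    and H_unit: "\<exists>e\<in>H. \<forall>x\<in>W. e x = x"
    and H_comp: "g \<in> H \<Longrightarrow> h \<in> H \<Longrightarrow> \<exists>k\<in>H. \<forall>x\<in>W. k x = g (h x)"
    and H_inverse: "g \<in> H \<Longrightarrow> \<exists>h\<in>H. \<forall>x\<in>W. h (g x) = x"
    and H_linear: "h \<in> H \<Longrightarrow> lin_on W h"
begin

definition act :: "(nat \<Rightarrow> nat) \<Rightarrow> ('c \<Rightarrow> real) \<Rightarrow> 'c \<Rightarrow> real" where
  "act \<sigma> x = x \<circ> rmap \<sigma>"

definition restrict_rows :: "nat set \<Rightarrow> ('c \<Rightarrow> real) \<Rightarrow> 'c \<Rightarrow> real" where
  "restrict_rows U x = (\<lambda>c. if rows c \<subseteq> U then x c else 0)"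

definition V :: "nat \<Rightarrow> ('c \<Rightarrow> real) set" where
  "V d = {x \<in> W. \<forall>c. \<not> rows c \<subseteq> {..<d} \<longrightarrow> x c = 0}"

definition G :: "nat \<Rightarrow> (('c \<Rightarrow> real) \<Rightarrow> 'c \<Rightarrow> real) set" where
  "G d = {h \<circ> act \<sigma> | h \<sigma>. h \<in> H \<and> \<sigma> permutes {..<d}}"

definition touched_rows :: "('c \<Rightarrow> nat) \<Rightarrow> nat set" where
  "touched_rows \<alpha> = (\<Union>c\<in>supp_mi \<alpha>. rows c)"

lemma act_apply: "act \<sigma> x c = x (rmap \<sigma> c)"
  by (simp add: act_def)

lemma act_id [simp]: "act id x = x"
  by (simp add: act_def rmap_id)

lemma act_act: "act \<sigma> (act \<tau> x) = act (\<tau> \<circ> \<sigma>) x"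
  unfolding act_def by (simp add: comp_assoc rmap_comp)

lemma act_inv_act: "bij \<sigma> \<Longrightarrow> act (Hilbert_Choice.inv \<sigma>) (act \<sigma> x) = x"
  by (metis act_act act_id bij_is_surj surj_iff)

lemma rmap_rmap_inv: "bij \<sigma> \<Longrightarrow> rmap \<sigma> (rmap (Hilbert_Choice.inv \<sigma>) c) = c"
  by (metis bij_is_surj surj_iff comp_apply id_apply rmap_comp rmap_id)

lemma bij_rmap:
  assumes "bij \<sigma>" shows "bij (rmap \<sigma>)"
proof (rule o_bij)
  show "rmap (Hilbert_Choice.inv \<sigma>) \<circ> rmap \<sigma> = id"
    using assms by (metis bij_is_inj inj_iff rmap_comp rmap_id)
  show "rmap \<sigma> \<circ> rmap (Hilbert_Choice.inv \<sigma>) = id"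
    using assms by (metis bij_is_surj surj_iff rmap_comp rmap_id)
qed

lemma restrict_rows_in_W: "x \<in> W \<Longrightarrow> restrict_rows U x \<in> W"
  unfolding restrict_rows_def by (rule cutoff_in_W)

lemma H_restrict_rows: "h \<in> H \<Longrightarrow> h (restrict_rows U x) = restrict_rows U (h x)"
  unfolding restrict_rows_def by (rule H_cutoff)

lemma H_act: "h \<in> H \<Longrightarrow> h (act \<sigma> x) = act \<sigma> (h x)"
  unfolding act_def by (rule H_comp_rmap)

lemma restrict_rows_act:
  assumes "bij \<sigma>" shows "restrict_rows U (act \<sigma> x) = act \<sigma> (restrict_rows (\<sigma> ` U) x)"
proof
  fix c
  have "rows c \<subseteq> U \<longleftrightarrow> \<sigma> ` rows c \<subseteq> \<sigma> ` U"
    using assms by (simp add: bij_is_inj inj_image_subset_iff)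
  then show "restrict_rows U (act \<sigma> x) c = act \<sigma> (restrict_rows (\<sigma> ` U) x) c"
    by (simp add: restrict_rows_def act_apply rows_rmap)
qed

lemma V_subset_W: "V d \<subseteq> W"
  unfolding V_def by auto

lemma V_zero: "x \<in> V d \<Longrightarrow> \<not> rows c \<subseteq> {..<d} \<Longrightarrow> x c = 0"
  unfolding V_def by auto

lemma V_mono:
  assumes "d \<le> e" shows "V d \<subseteq> V e"
proof -
  have "{..<d} \<subseteq> {..<e}" using assms by auto
  then show ?thesis unfolding V_def by (blast dest: subset_trans)
qed

lemma restrict_rows_V: "x \<in> V d \<Longrightarrow> restrict_rows {..<d} x = x"
  unfolding restrict_rows_def V_def by auto

lemma restrict_rows_in_V: "x \<in> V d \<Longrightarrow> restrict_rows U x \<in> V d"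
  unfolding V_def using restrict_rows_in_W by (auto simp: restrict_rows_def)

lemma act_in_V:
  assumes \<sigma>: "\<sigma> permutes {..<d}" and x: "x \<in> V d"
  shows "act \<sigma> x \<in> V d"
  unfolding V_def
proof (intro CollectI conjI allI impI)
  show "act \<sigma> x \<in> W" using x comp_rmap_in_W V_subset_W unfolding act_def by blast
  fix c assume "\<not> rows c \<subseteq> {..<d}"
  then have "\<not> rows (rmap \<sigma> c) \<subseteq> {..<d}"
    by (simp add: rows_rmap permutes_image_subset_iff[OF \<sigma>])
  then show "act \<sigma> x c = 0" using x by (simp add: act_apply V_zero)
qed

lemma H_in_V:
  assumes h: "h \<in> H" and x: "x \<in> V d"
  shows "h x \<in> V d"
  unfolding V_def
proof (intro CollectI conjI allI impI)
  show "h x \<in> W" using h x V_subset_W H_in_W by blast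
  fix c assume "\<not> rows c \<subseteq> {..<d}"
  then show "h x c = 0"
    using H_restrict_rows[OF h] restrict_rows_V[OF x] by (metis restrict_rows_def)
qed

lemma lin_comb_in_V: "x \<in> V d \<Longrightarrow> y \<in> V d \<Longrightarrow> lin_comb a x b y \<in> V d"
  unfolding V_def using lin_comb_in_W by (auto simp: lin_comb_def)

lemma monomial_fun_restrict_rows:
  assumes "finite (supp_mi \<alpha>)"
  shows "monomial_fun \<alpha> (restrict_rows U x) = (if touched_rows \<alpha> \<subseteq> U then monomial_fun \<alpha> x else 0)"
proof (cases "touched_rows \<alpha> \<subseteq> U")
  case True
  then have "restrict_rows U x c = x c" if "c \<in> supp_mi \<alpha>" for c
    using that unfolding touched_rows_def restrict_rows_def by auto
  then show ?thesis using True unfolding monomial_fun_def by simp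
next
  case False
  then obtain c where c: "c \<in> supp_mi \<alpha>" "\<not> rows c \<subseteq> U" unfolding touched_rows_def by auto
  then have "restrict_rows U x c ^ \<alpha> c = 0" by (simp add: restrict_rows_def supp_mi_def)
  then have "monomial_fun \<alpha> (restrict_rows U x) = 0"
    unfolding monomial_fun_def using assms c(1) by (meson prod_zero)
  then show ?thesis using False by simp
qed

lemma card_touched_rows:
  assumes "finite (supp_mi \<alpha>)"
  shows "finite (touched_rows \<alpha>)" "card (touched_rows \<alpha>) \<le> r * mdeg \<alpha>"
proof -
  show "finite (touched_rows \<alpha>)" unfolding touched_rows_def using assms finite_rows by auto
  have "card (touched_rows \<alpha>) \<le> (\<Sum>c\<in>supp_mi \<alpha>. card (rows c))"
    unfolding touched_rows_def using card_UN_le[OF assms] .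
  also have "\<dots> \<le> (\<Sum>c\<in>supp_mi \<alpha>. r * \<alpha> c)"
  proof (rule sum_mono)
    fix c assume "c \<in> supp_mi \<alpha>"
    then have "1 \<le> \<alpha> c" by (simp add: supp_mi_def)
    then show "card (rows c) \<le> r * \<alpha> c"
      using card_rows[of c] by (metis le_trans mult.right_neutral mult_le_mono2)
  qed
  also have "\<dots> = r * mdeg \<alpha>" unfolding mdeg_def by (simp add: sum_distrib_left)
  finally show "card (touched_rows \<alpha>) \<le> r * mdeg \<alpha>" .
qed

lemma G_memI: "h \<in> H \<Longrightarrow> \<sigma> permutes {..<d} \<Longrightarrow> h \<circ> act \<sigma> \<in> G d"
  unfolding G_def by blast

lemma G_memE:
  assumes "g \<in> G d"
  obtains h \<sigma> where "g = h \<circ> act \<sigma>" "h \<in> H" "\<sigma> permutes {..<d}"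
  using assms unfolding G_def by blast

lemma G_trivial_H: "H = {id} \<Longrightarrow> G d = {act \<sigma> | \<sigma>. \<sigma> permutes {..<d}}"
  unfolding G_def by auto

lemma G_mono: "G d \<subseteq> G (Suc d)"
  unfolding G_def using permutes_subset[of _ "{..<d}" "{..<Suc d}"] by auto

lemma G_in_V: "g \<in> G d \<Longrightarrow> x \<in> V d \<Longrightarrow> g x \<in> V d"
  unfolding G_def using act_in_V H_in_V by auto

lemma invariant_polys_G_act:
  assumes f: "f \<in> invariant_polys (V d) (G d) m" and \<sigma>: "\<sigma> permutes {..<d}" and x: "x \<in> V d"
  shows "f (act \<sigma> x) = f x"
proof -
  from H_unit obtain e where e: "e \<in> H" "\<forall>x\<in>W. e x = x" ..
  have "e \<circ> act \<sigma> \<in> G d" using e(1) \<sigma> by (rule G_memI)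
  moreover have "e (act \<sigma> x) = act \<sigma> x" using e(2) act_in_V[OF \<sigma> x] V_subset_W by blast
  ultimately show ?thesis using f x unfolding invariant_polys_def by force
qed

lemma invariant_polys_G_H:
  assumes f: "f \<in> invariant_polys (V d) (G d) m" and h: "h \<in> H" and x: "x \<in> V d"
  shows "f (h x) = f x"
proof -
  have "h \<circ> act id \<in> G d" using h permutes_id by (rule G_memI)
  then show ?thesis using f x unfolding invariant_polys_def by force
qed

lemma invariant_polys_GI:
  assumes "f \<in> poly_funs (V d) m"
    and "\<And>\<sigma> x. \<sigma> permutes {..<d} \<Longrightarrow> x \<in> V d \<Longrightarrow> f (act \<sigma> x) = f x"
    and "\<And>h x. h \<in> H \<Longrightarrow> x \<in> V d \<Longrightarrow> f (h x) = f x"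
  shows "f \<in> invariant_polys (V d) (G d) m"
  unfolding invariant_polys_def G_def using assms act_in_V by auto

subsection \<open>Injectivity of the restriction\<close>

lemma poly_only_touching_monomials:
  assumes A: "finite A" "\<forall>\<alpha>\<in>A. finite (supp_mi \<alpha>)"
    and F: "\<forall>x\<in>Y. F x = (\<Sum>\<alpha>\<in>A. c \<alpha> * monomial_fun \<alpha> x)"
    and S: "finite S"
    and vanish: "\<forall>i\<in>S. \<forall>x\<in>Y. restrict_rows (-{i}) x \<in> Y \<and> F (restrict_rows (-{i}) x) = 0"
  shows "\<forall>x\<in>Y. F x = (\<Sum>\<alpha>\<in>A. (if S \<subseteq> touched_rows \<alpha> then c \<alpha> else 0) * monomial_fun \<alpha> x)"
  using S vanish
proof (induction S rule: finite_induct)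
  case empty
  then show ?case using F by simp
next
  case (insert i S)
  show ?case
  proof
    fix x assume x: "x \<in> Y"
    let ?x' = "restrict_rows (-{i}) x"
    have IH: "\<forall>x\<in>Y. F x = (\<Sum>\<alpha>\<in>A. (if S \<subseteq> touched_rows \<alpha> then c \<alpha> else 0) * monomial_fun \<alpha> x)"
      using insert by auto
    have x': "?x' \<in> Y" "F ?x' = 0" using insert.prems x by auto
    have "F x = F x - F ?x'" using x' by simp
    also have "\<dots> = (\<Sum>\<alpha>\<in>A. (if S \<subseteq> touched_rows \<alpha> then c \<alpha> else 0) *
                 (monomial_fun \<alpha> x - monomial_fun \<alpha> ?x'))"
      using IH x x'(1) by (simp add: sum_subtractf algebra_simps)
    also have "\<dots> = (\<Sum>\<alpha>\<in>A. (if insert i S \<subseteq> touched_rows \<alpha> then c \<alpha> else 0) * monomial_fun \<alpha> x)"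
      using A(2) by (intro sum.cong) (auto simp: monomial_fun_restrict_rows)
    finally show "F x = (\<Sum>\<alpha>\<in>A. (if insert i S \<subseteq> touched_rows \<alpha> then c \<alpha> else 0) * monomial_fun \<alpha> x)" .
  qed
qed

lemma restrict_rows_delete_last:
  assumes x: "x \<in> V (Suc d)"
  shows "restrict_rows (-{d}) x \<in> V d"
  unfolding V_def
proof (intro CollectI conjI allI impI)
  show "restrict_rows (-{d}) x \<in> W" using x V_subset_W restrict_rows_in_W by blast
  fix c assume "\<not> rows c \<subseteq> {..<d}"
  then have "\<not> rows c \<subseteq> - {d} \<or> \<not> rows c \<subseteq> {..<Suc d}" by (auto simp: less_Suc_eq)
  then show "restrict_rows (-{d}) x c = 0"
  proof
    assume "\<not> rows c \<subseteq> {..<Suc d}"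
    then show ?thesis using x V_zero by (simp add: restrict_rows_def)
  qed (simp add: restrict_rows_def)
qed

text \<open>Transposing row \<open>i\<close> with the last row reduces deleting row \<open>i\<close> to deleting the last row.\<close>

lemma invariant_vanishes_on_row_deletion:
  assumes perm_inv: "\<And>\<sigma> x. \<sigma> permutes {..<Suc d} \<Longrightarrow> x \<in> V (Suc d) \<Longrightarrow> F (act \<sigma> x) = F x"
    and zero: "\<And>x. x \<in> V d \<Longrightarrow> F x = 0"
    and i: "i < Suc d" and x: "x \<in> V (Suc d)"
  shows "F (restrict_rows (-{i}) x) = 0"
proof -
  define \<tau> where "\<tau> = transpose i d"
  have \<tau>: "\<tau> permutes {..<Suc d}" unfolding \<tau>_def using i by (rule transpose_permutes_lessThan_Suc)
  then have "bij \<tau>" by (rule permutes_bij)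
  define y where "y = restrict_rows (-{d}) (act \<tau> x)"
  have y: "y \<in> V d" unfolding y_def using act_in_V[OF \<tau> x] by (rule restrict_rows_delete_last)
  have "\<tau> ` (-{d}) = -{i}"
    using bij_image_Compl_eq[OF \<open>bij \<tau>\<close>, of "{d}"] by (simp add: \<tau>_def)
  then have "act \<tau> y = restrict_rows (-{i}) x"
    unfolding y_def restrict_rows_act[OF \<open>bij \<tau>\<close>] by (simp add: act_act \<tau>_def)
  moreover have "y \<in> V (Suc d)" using y V_mono[of d "Suc d"] by auto
  ultimately have "F (restrict_rows (-{i}) x) = F y" using perm_inv[OF \<tau>] by metis
  also have "\<dots> = 0" using zero[OF y] .
  finally show ?thesis .
qed

lemma invariant_poly_vanishing_on_V:
  assumes rm: "r * m < Suc d" and F: "F \<in> poly_funs (V (Suc d)) m"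
    and perm_inv: "\<And>\<sigma> x. \<sigma> permutes {..<Suc d} \<Longrightarrow> x \<in> V (Suc d) \<Longrightarrow> F (act \<sigma> x) = F x"
    and zero: "\<And>x. x \<in> V d \<Longrightarrow> F x = 0"
  shows "F x = 0"
proof -
  obtain A c where A: "finite A" "\<forall>\<alpha>\<in>A. finite (supp_mi \<alpha>) \<and> mdeg \<alpha> \<le> m"
    "\<forall>x\<in>V (Suc d). F x = (\<Sum>\<alpha>\<in>A. c \<alpha> * monomial_fun \<alpha> x)"
    using F unfolding poly_funs_iff poly_on_def by blast
  have "F (restrict_rows (-{i}) x) = 0" if "i < Suc d" "x \<in> V (Suc d)" for i x
    using perm_inv zero that by (rule invariant_vanishes_on_row_deletion)
  then have vanish: "\<forall>i\<in>{..<Suc d}. \<forall>x\<in>V (Suc d).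
      restrict_rows (-{i}) x \<in> V (Suc d) \<and> F (restrict_rows (-{i}) x) = 0"
    by (simp add: restrict_rows_in_V)
  have fin: "\<forall>\<alpha>\<in>A. finite (supp_mi \<alpha>)" using A(2) by blast
  have touching: "\<forall>x\<in>V (Suc d). F x =
      (\<Sum>\<alpha>\<in>A. (if {..<Suc d} \<subseteq> touched_rows \<alpha> then c \<alpha> else 0) * monomial_fun \<alpha> x)"
    using poly_only_touching_monomials[OF A(1) fin A(3) finite_lessThan vanish] .
  have no_cover: "\<not> {..<Suc d} \<subseteq> touched_rows \<alpha>" if \<alpha>: "\<alpha> \<in> A" for \<alpha>
  proof
    assume cover: "{..<Suc d} \<subseteq> touched_rows \<alpha>"
    have "finite (touched_rows \<alpha>)" using card_touched_rows(1) fin \<alpha> by blast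
    then have "Suc d \<le> card (touched_rows \<alpha>)" using card_mono[OF _ cover] by simp
    also have "\<dots> \<le> r * mdeg \<alpha>" using card_touched_rows(2) fin \<alpha> by blast
    also have "\<dots> \<le> r * m" using A(2) \<alpha> by simp
    finally show False using rm by simp
  qed
  show ?thesis
  proof (cases "x \<in> V (Suc d)")
    case True
    then show ?thesis using touching no_cover by simp
  next
    case False
    then show ?thesis using F by (simp add: poly_funs_iff)
  qed
qed

lemma restriction_inj_on:
  assumes "r * m \<le> d"
  shows "inj_on (\<lambda>F x. if x \<in> V d then F x else 0) (invariant_polys (V (Suc d)) (G (Suc d)) m)"
proof (rule inj_onI)
  fix F1 F2
  assume F1: "F1 \<in> invariant_polys (V (Suc d)) (G (Suc d)) m"
    and F2: "F2 \<in> invariant_polys (V (Suc d)) (G (Suc d)) m"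
    and eq: "(\<lambda>x. if x \<in> V d then F1 x else 0) = (\<lambda>x. if x \<in> V d then F2 x else 0)"
  have "F1 \<in> poly_funs (V (Suc d)) m" "F2 \<in> poly_funs (V (Suc d)) m"
    using F1 F2 by (simp_all add: invariant_polys_def)
  then have diff: "(\<lambda>x. F1 x - F2 x) \<in> poly_funs (V (Suc d)) m"
    by (auto simp: poly_funs_iff intro: poly_on_diff)
  have perm: "F1 (act \<sigma> x) - F2 (act \<sigma> x) = F1 x - F2 x"
    if "\<sigma> permutes {..<Suc d}" "x \<in> V (Suc d)" for \<sigma> x
    using invariant_polys_G_act[OF F1 that] invariant_polys_G_act[OF F2 that] by simp
  have zero: "F1 x - F2 x = 0" if "x \<in> V d" for x using fun_cong[OF eq, of x] that by simp
  have "r * m < Suc d" using assms by simp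
  from invariant_poly_vanishing_on_V[where F = "\<lambda>x. F1 x - F2 x", OF this diff perm zero]
  have "F1 x - F2 x = 0" for x .
  then show "F1 = F2" by auto
qed

subsection \<open>The extension of an invariant polynomial\<close>

definition free_row :: "nat \<Rightarrow> nat set \<Rightarrow> nat" where
  "free_row d U = (SOME j. j < Suc d \<and> j \<notin> U)"

definition squeeze :: "nat \<Rightarrow> nat set \<Rightarrow> ('c \<Rightarrow> real) \<Rightarrow> 'c \<Rightarrow> real" where
  "squeeze d U x = act (transpose (free_row d U) d) (restrict_rows U x)"

definition extension :: "nat \<Rightarrow> (('c \<Rightarrow> real) \<Rightarrow> real) \<Rightarrow> ('c \<Rightarrow> real) \<Rightarrow> real" where
  "extension d f x = (if x \<in> V (Suc d) then
     - (\<Sum>U | U \<subset> {..<Suc d}. (-1) ^ card ({..<Suc d} - U) * f (squeeze d U x)) else 0)"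

lemma free_row:
  assumes "U \<subset> {..<Suc d}"
  shows "free_row d U < Suc d" "free_row d U \<notin> U"
proof -
  have "\<exists>j. j < Suc d \<and> j \<notin> U" using assms by auto
  from someI_ex[OF this] show "free_row d U < Suc d" "free_row d U \<notin> U"
    unfolding free_row_def by auto
qed

lemma squeeze_in_V:
  assumes U: "U \<subset> {..<Suc d}" and x: "x \<in> V (Suc d)"
  shows "squeeze d U x \<in> V d"
  unfolding V_def
proof (intro CollectI conjI allI impI)
  define j \<tau> where "j = free_row d U" and "\<tau> = transpose j d"
  have e: "squeeze d U x c = restrict_rows U x (rmap \<tau> c)" for c
    unfolding squeeze_def j_def \<tau>_def by (simp add: act_apply)
  have z: "restrict_rows U x \<in> V (Suc d)" using x by (rule restrict_rows_in_V)
  show "squeeze d U x \<in> W"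
    unfolding squeeze_def act_def using z V_subset_W comp_rmap_in_W by blast
  fix c assume c: "\<not> rows c \<subseteq> {..<d}"
  show "squeeze d U x c = 0"
  proof (cases "rows c \<subseteq> {..<Suc d}")
    case False
    have "\<tau> permutes {..<Suc d}"
      unfolding \<tau>_def j_def using free_row[OF U] by (intro transpose_permutes_lessThan_Suc) auto
    then have "\<not> rows (rmap \<tau> c) \<subseteq> {..<Suc d}"
      using False by (simp add: rows_rmap permutes_image_subset_iff)
    then show ?thesis using e z V_zero by simp
  next
    case True
    then have "d \<in> rows c" using c by (auto simp: less_Suc_eq)
    then have "j \<in> rows (rmap \<tau> c)" by (force simp: rows_rmap \<tau>_def)
    then show ?thesis using e free_row[OF U] by (auto simp: restrict_rows_def j_def)
  qed
qed

lemma squeeze_on_V: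
  assumes U: "U \<subset> {..<Suc d}" and x: "x \<in> V d"
  shows "squeeze d U x = restrict_rows (U - {d}) x"
proof
  fix c
  define j \<tau> where "j = free_row d U" and "\<tau> = transpose j d"
  have j: "j < Suc d" "j \<notin> U" using free_row[OF U] unfolding j_def by auto
  have e: "squeeze d U x c = (if \<tau> ` rows c \<subseteq> U then x (rmap \<tau> c) else 0)"
    unfolding squeeze_def j_def \<tau>_def by (simp add: act_apply restrict_rows_def rows_rmap)
  show "squeeze d U x c = restrict_rows (U - {d}) x c"
  proof (cases "rows c \<subseteq> U - {d}")
    case True
    then have fix_c: "\<And>i. i \<in> rows c \<Longrightarrow> \<tau> i = i"
      using j unfolding \<tau>_def by (auto intro!: transpose_apply_other)
    then have "\<tau> ` rows c = rows c" by auto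
    then show ?thesis using e rmap_fixing[OF fix_c] True by (auto simp: restrict_rows_def)
  next
    case False
    have "x (rmap \<tau> c) = 0" if sub: "\<tau> ` rows c \<subseteq> U"
    proof (rule ccontr)
      assume "x (rmap \<tau> c) \<noteq> 0"
      then have below: "\<tau> ` rows c \<subseteq> {..<d}" using x V_zero rows_rmap by metis
      have "d \<notin> rows c"
      proof
        assume "d \<in> rows c"
        then have "j \<in> \<tau> ` rows c" unfolding \<tau>_def by force
        then show False using sub j by auto
      qed
      moreover have "j \<notin> rows c"
      proof
        assume "j \<in> rows c"
        then have "d \<in> \<tau> ` rows c" unfolding \<tau>_def by force
        then show False using below by auto
      qed
      ultimately have "\<tau> ` rows c = rows c" unfolding \<tau>_def by (auto intro!: transpose_apply_other)
      then show False using False sub \<open>d \<notin> rows c\<close> by auto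
    qed
    then show ?thesis using e False by (auto simp: restrict_rows_def)
  qed
qed

lemma extension_on_V:
  assumes x: "x \<in> V d"
  shows "extension d f x = f x"
proof -
  have "x \<in> V (Suc d)" using x V_mono[of d "Suc d"] by auto
  moreover have "(\<Sum>U | U \<subset> {..<Suc d}. (-1::real) ^ card ({..<Suc d} - U) * f (squeeze d U x)) =
        (\<Sum>U | U \<subset> {..<Suc d}. (-1) ^ card ({..<Suc d} - U) * f (restrict_rows (U - {d}) x))"
    by (rule sum.cong) (simp_all add: squeeze_on_V[OF _ x])
  moreover have "\<dots> = - f x"
    using alternating_sum_proper_subsets[of d "\<lambda>U. f (restrict_rows U x)"] restrict_rows_V[OF x]
    by simp
  ultimately show ?thesis unfolding extension_def by simp
qed

text \<open>Compose \<open>\<rho>\<close> with the transposition sending \<open>\<rho> d\<close> back to \<open>d\<close>: both rows it moves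
  are empty in \<open>z\<close>.\<close>

lemma act_eq_act_permutes_lessThan:
  assumes z: "z \<in> V d" and \<rho>: "\<rho> permutes {..<Suc d}" and \<rho>z: "act \<rho> z \<in> V d"
  shows "\<exists>\<rho>'. \<rho>' permutes {..<d} \<and> act \<rho>' z = act \<rho> z"
proof -
  define a \<tau> where "a = \<rho> d" and "\<tau> = transpose a d"
  have "a < Suc d" unfolding a_def using permutes_in_image[OF \<rho>] by auto
  then have \<tau>: "\<tau> permutes {..<Suc d}" unfolding \<tau>_def by (rule transpose_permutes_lessThan_Suc)
  have "bij \<rho>" using \<rho> by (rule permutes_bij)
  have \<rho>': "\<tau> \<circ> \<rho> permutes {..<d}"
    using permutes_compose[OF \<rho> \<tau>] by (rule permutes_lessThan_Suc_fixing) (simp add: \<tau>_def a_def)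
  have empty: "z c = 0" if "a \<in> rows c \<or> d \<in> rows c" for c
    using that
  proof
    assume "a \<in> rows c"
    define c' where "c' = rmap (Hilbert_Choice.inv \<rho>) c"
    have "d \<in> rows c'" unfolding c'_def rows_rmap using \<open>a \<in> rows c\<close> \<open>bij \<rho>\<close>
      by (metis a_def bij_inv_eq_iff image_eqI)
    then have "act \<rho> z c' = 0" using \<rho>z V_zero by auto
    then show ?thesis by (simp add: act_apply c'_def rmap_rmap_inv[OF \<open>bij \<rho>\<close>])
  qed (use z V_zero in auto)
  have "z (rmap \<tau> c) = z c" for c
  proof (cases "\<forall>i\<in>rows c. \<tau> i = i")
    case True
    then show ?thesis using rmap_fixing by simp
  next
    case False
    then obtain i where i: "i \<in> rows c" "i = a \<or> i = d"
      unfolding \<tau>_def by (metis transpose_apply_other)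
    have "\<tau> i \<in> rows (rmap \<tau> c)" using i(1) by (simp add: rows_rmap)
    moreover have "\<tau> i = a \<or> \<tau> i = d" using i(2) by (auto simp: \<tau>_def)
    ultimately have "z (rmap \<tau> c) = 0" using empty by metis
    moreover have "z c = 0" using empty i by blast
    ultimately show ?thesis by simp
  qed
  then have "act (\<tau> \<circ> \<rho>) z = act \<rho> z" by (simp add: act_def fun_eq_iff rmap_comp[symmetric])
  then show ?thesis using \<rho>' by blast
qed

lemma squeeze_act:
  assumes U: "U \<subset> {..<Suc d}" and \<sigma>: "\<sigma> permutes {..<Suc d}"
  shows "\<exists>\<rho>. \<rho> permutes {..<Suc d} \<and> act \<rho> (squeeze d (\<sigma> ` U) x) = squeeze d U (act \<sigma> x)"
proof -
  have "bij \<sigma>" using \<sigma> by (rule permutes_bij)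
  have U': "\<sigma> ` U \<subset> {..<Suc d}" using U by (simp add: permutes_image_psubset_iff[OF \<sigma>])
  define \<tau>1 \<tau>2 where "\<tau>1 = transpose (free_row d U) d" and "\<tau>2 = transpose (free_row d (\<sigma> ` U)) d"
  have "\<tau>1 permutes {..<Suc d}" "\<tau>2 permutes {..<Suc d}"
    unfolding \<tau>1_def \<tau>2_def using free_row[OF U] free_row[OF U']
    by (auto intro: transpose_permutes_lessThan_Suc)
  then have "\<tau>2 \<circ> (\<sigma> \<circ> \<tau>1) permutes {..<Suc d}" using \<sigma> by (intro permutes_compose)
  moreover have "act (\<tau>2 \<circ> (\<sigma> \<circ> \<tau>1)) (squeeze d (\<sigma> ` U) x) = squeeze d U (act \<sigma> x)"
  proof -
    define y where "y = restrict_rows (\<sigma> ` U) x"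
    have "squeeze d (\<sigma> ` U) x = act \<tau>2 y" unfolding squeeze_def \<tau>2_def y_def ..
    moreover have "squeeze d U (act \<sigma> x) = act (\<sigma> \<circ> \<tau>1) y"
      unfolding squeeze_def \<tau>1_def y_def restrict_rows_act[OF \<open>bij \<sigma>\<close>] act_act ..
    moreover have "\<tau>2 \<circ> (\<tau>2 \<circ> (\<sigma> \<circ> \<tau>1)) = \<sigma> \<circ> \<tau>1"
      by (simp add: \<tau>2_def comp_assoc[symmetric])
    ultimately show ?thesis by (simp add: act_act)
  qed
  ultimately show ?thesis by blast
qed

lemma extension_act:
  assumes \<sigma>: "\<sigma> permutes {..<Suc d}" and x: "x \<in> V (Suc d)"
    and f: "\<And>\<rho> y. \<rho> permutes {..<d} \<Longrightarrow> y \<in> V d \<Longrightarrow> f (act \<rho> y) = f y"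
  shows "extension d f (act \<sigma> x) = extension d f x"
proof -
  let ?N = "{..<Suc d}"
  let ?T = "\<lambda>U. (-1::real) ^ card (?N - U) * f (squeeze d U x)"
  have "bij \<sigma>" using \<sigma> by (rule permutes_bij)
  have proper: "{U. U \<subset> ?N} = Pow ?N - {?N}" by auto
  have bb: "bij_betw (image \<sigma>) {U. U \<subset> ?N} {U. U \<subset> ?N}"
    unfolding proper using bij_betw_Pow[OF permutes_imp_bij[OF \<sigma>]] permutes_image[OF \<sigma>]
    by (intro bij_betw_DiffI) auto
  have "(-1::real) ^ card (?N - U) * f (squeeze d U (act \<sigma> x)) = ?T (\<sigma> ` U)" if U: "U \<subset> ?N" for U
  proof -
    have "card (?N - \<sigma> ` U) = card (\<sigma> ` (?N - U))"
      using permutes_image[OF \<sigma>] \<open>bij \<sigma>\<close> by (metis bij_is_inj image_set_diff)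
    also have "\<dots> = card (?N - U)"
      using \<open>bij \<sigma>\<close> by (metis bij_betw_imp_inj_on card_image inj_on_subset subset_UNIV)
    finally have card: "card (?N - \<sigma> ` U) = card (?N - U)" .
    have U': "\<sigma> ` U \<subset> ?N" using U by (simp add: permutes_image_psubset_iff[OF \<sigma>])
    obtain \<rho> where \<rho>: "\<rho> permutes ?N" "act \<rho> (squeeze d (\<sigma> ` U) x) = squeeze d U (act \<sigma> x)"
      using squeeze_act[OF U \<sigma>] by blast
    obtain \<rho>' where "\<rho>' permutes {..<d}" "act \<rho>' (squeeze d (\<sigma> ` U) x) = squeeze d U (act \<sigma> x)"
      using act_eq_act_permutes_lessThan[OF squeeze_in_V[OF U' x] \<rho>(1)] \<rho>(2)
        squeeze_in_V[OF U act_in_V[OF \<sigma> x]] by auto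
    then have "f (squeeze d U (act \<sigma> x)) = f (squeeze d (\<sigma> ` U) x)"
      using f squeeze_in_V[OF U' x] by metis
    then show ?thesis using card by simp
  qed
  then have "(\<Sum>U | U \<subset> ?N. (-1::real) ^ card (?N - U) * f (squeeze d U (act \<sigma> x))) =
      (\<Sum>U | U \<subset> ?N. ?T (\<sigma> ` U))"
    by (intro sum.cong) auto
  also have "\<dots> = (\<Sum>U | U \<subset> ?N. ?T U)" using sum.reindex_bij_betw[OF bb, of ?T] .
  finally show ?thesis unfolding extension_def by (simp only: x act_in_V[OF \<sigma> x] if_True)
qed

lemma squeeze_H: "h \<in> H \<Longrightarrow> squeeze d U (h x) = h (squeeze d U x)"
  unfolding squeeze_def by (simp add: H_act H_restrict_rows)

lemma extension_H:
  assumes h: "h \<in> H" and x: "x \<in> V (Suc d)" and f: "\<And>y. y \<in> V d \<Longrightarrow> f (h y) = f y"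
  shows "extension d f (h x) = extension d f x"
  unfolding extension_def using x H_in_V[OF h x] squeeze_H[OF h] f squeeze_in_V[OF _ x] by simp

lemma extension_poly:
  assumes f: "f \<in> poly_funs (V d) m"
  shows "extension d f \<in> poly_funs (V (Suc d)) m"
proof -
  let ?N = "{..<Suc d}"
  have each: "poly_on (V (Suc d)) m (\<lambda>x. f (squeeze d U x))" if U: "U \<subset> ?N" for U
  proof (rule poly_on_compose[where Z = "V d" and h = "squeeze d U"])
    show "poly_on (V d) m f" using f by (simp add: poly_funs_iff)
    show "\<And>x. x \<in> V (Suc d) \<Longrightarrow> squeeze d U x \<in> V d" using squeeze_in_V[OF U] .
    fix \<alpha> :: "'c \<Rightarrow> nat" assume fin: "finite (supp_mi \<alpha>)" and deg: "mdeg \<alpha> \<le> m"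
    define \<tau> where "\<tau> = transpose (free_row d U) d"
    have b: "bij (rmap \<tau>)" unfolding \<tau>_def by (simp add: bij_rmap)
    define \<beta> where "\<beta> = \<alpha> \<circ> Hilbert_Choice.inv (rmap \<tau>)"
    have \<beta>: "finite (supp_mi \<beta>)" "mdeg \<beta> \<le> m"
      using monomial_fun_comp(2,3)[OF b fin] deg unfolding \<beta>_def by auto
    have "monomial_fun \<alpha> (squeeze d U x) =
        (if touched_rows \<beta> \<subseteq> U then monomial_fun \<beta> x else 0)" for x
      unfolding squeeze_def \<tau>_def[symmetric] act_def monomial_fun_comp(1)[OF b fin] \<beta>_def[symmetric]
      using monomial_fun_restrict_rows[OF \<beta>(1)] .
    then show "poly_on (V (Suc d)) m (\<lambda>x. monomial_fun \<alpha> (squeeze d U x))"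
      using poly_on_monomial[OF \<beta>] poly_on_zero by (cases "touched_rows \<beta> \<subseteq> U") simp_all
  qed
  have "finite {U. U \<subset> ?N}" by (rule finite_subset[of _ "Pow ?N"]) auto
  then have "poly_on (V (Suc d)) m
      (\<lambda>x. \<Sum>U | U \<subset> ?N. (- ((-1::real) ^ card (?N - U))) * f (squeeze d U x))"
    using each by (intro poly_on_sum) auto
  then have "poly_on (V (Suc d)) m (extension d f)"
    by (rule poly_on_cong) (simp add: extension_def sum_negf)
  then show ?thesis unfolding poly_funs_iff by (simp add: extension_def)
qed

lemma restriction_invariant:
  assumes F: "F \<in> invariant_polys (V (Suc d)) (G (Suc d)) m"
  shows "(\<lambda>x. if x \<in> V d then F x else 0) \<in> invariant_polys (V d) (G d) m"
  unfolding invariant_polys_def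
proof (intro CollectI conjI ballI)
  have "poly_on (V d) m F"
    using F V_mono[of d "Suc d"] by (auto simp: invariant_polys_def poly_funs_iff intro: poly_on_subset)
  then show "(\<lambda>x. if x \<in> V d then F x else 0) \<in> poly_funs (V d) m"
    unfolding poly_funs_iff by (auto elim: poly_on_cong)
  fix g x assume g: "g \<in> G d" and x: "x \<in> V d"
  have "g \<in> G (Suc d)" "x \<in> V (Suc d)" using g x G_mono V_mono[of d "Suc d"] by auto
  then have "F (g x) = F x" using F unfolding invariant_polys_def by blast
  then show "(if g x \<in> V d then F (g x) else 0) = (if x \<in> V d then F x else 0)"
    using G_in_V[OF g x] x by simp
qed

lemma extension_invariant:
  assumes f: "f \<in> invariant_polys (V d) (G d) m"
  shows "extension d f \<in> invariant_polys (V (Suc d)) (G (Suc d)) m"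
proof -
  have "extension d f \<in> poly_funs (V (Suc d)) m"
    using f by (intro extension_poly) (simp add: invariant_polys_def)
  moreover have "extension d f (act \<sigma> x) = extension d f x"
    if "\<sigma> permutes {..<Suc d}" "x \<in> V (Suc d)" for \<sigma> x
    using that invariant_polys_G_act[OF f] by (rule extension_act)
  moreover have "extension d f (h x) = extension d f x" if "h \<in> H" "x \<in> V (Suc d)" for h x
    using that invariant_polys_G_H[OF f that(1)] by (rule extension_H)
  ultimately show ?thesis by (rule invariant_polys_GI)
qed

lemma restriction_extension:
  assumes "f \<in> poly_funs (V d) m"
  shows "(\<lambda>x. if x \<in> V d then extension d f x else 0) = f"
proof
  fix x show "(if x \<in> V d then extension d f x else 0) = f x"
    using assms by (cases "x \<in> V d") (simp_all add: extension_on_V poly_funs_iff)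
qed

theorem stable_from_G:
  assumes \<gamma>: "\<And>d x. x \<in> V d \<Longrightarrow> \<gamma> d x = x" and D: "r * m \<le> D"
  shows "stable_from V G \<gamma> m D"
  unfolding stable_from_def
proof (intro allI impI)
  fix d assume "D \<le> d"
  let ?res = "\<lambda>F x. if x \<in> V d then F x else 0"
  have "restr (V d) (\<gamma> d) = ?res" by (intro ext) (simp add: restr_def \<gamma>)
  moreover have "inj_on ?res (invariant_polys (V (Suc d)) (G (Suc d)) m)"
    using D \<open>D \<le> d\<close> by (intro restriction_inj_on) simp
  moreover have "?res ` invariant_polys (V (Suc d)) (G (Suc d)) m = invariant_polys (V d) (G d) m"
  proof (intro equalityI subsetI)
    fix f assume f: "f \<in> invariant_polys (V d) (G d) m"
    then have "f = ?res (extension d f)"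
      using restriction_extension[of f d m] by (simp add: invariant_polys_def)
    moreover have "extension d f \<in> invariant_polys (V (Suc d)) (G (Suc d)) m"
      using f by (rule extension_invariant)
    ultimately show "f \<in> ?res ` invariant_polys (V (Suc d)) (G (Suc d)) m"
      by (rule image_eqI[where f = ?res])
  next
    fix f assume "f \<in> ?res ` invariant_polys (V (Suc d)) (G (Suc d)) m"
    then obtain F where "F \<in> invariant_polys (V (Suc d)) (G (Suc d)) m" "f = ?res F" by blast
    then show "f \<in> invariant_polys (V d) (G d) m" using restriction_invariant by simp
  qed
  ultimately show "bij_betw (restr (V d) (\<gamma> d))
      (invariant_polys (V (Suc d)) (G (Suc d)) m) (invariant_polys (V d) (G d) m)"
    by (simp only: bij_betw_def)
qed


lemma G_unit: "\<exists>e\<in>G d. \<forall>x\<in>V d. e x = x"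
proof -
  from H_unit obtain e where e: "e \<in> H" "\<forall>x\<in>W. e x = x" ..
  then have "e \<circ> act id \<in> G d" using permutes_id by (intro G_memI)
  moreover have "\<forall>x\<in>V d. (e \<circ> act id) x = x" using e(2) V_subset_W by auto
  ultimately show ?thesis by blast
qed

lemma G_comp:
  assumes "g \<in> G d" "g' \<in> G d"
  shows "\<exists>k\<in>G d. \<forall>x\<in>V d. k x = g (g' x)"
proof -
  obtain h \<sigma> where g: "g = h \<circ> act \<sigma>" "h \<in> H" "\<sigma> permutes {..<d}"
    using assms(1) by (rule G_memE)
  obtain h' \<sigma>' where g': "g' = h' \<circ> act \<sigma>'" "h' \<in> H" "\<sigma>' permutes {..<d}"
    using assms(2) by (rule G_memE)
  from H_comp[OF g(2) g'(2)] obtain k where k: "k \<in> H" "\<forall>x\<in>W. k x = h (h' x)" ..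
  have "k \<circ> act (\<sigma>' \<circ> \<sigma>) \<in> G d"
    using k(1) permutes_compose[OF g(3) g'(3)] by (rule G_memI)
  moreover have "(k \<circ> act (\<sigma>' \<circ> \<sigma>)) x = g (g' x)" if "x \<in> V d" for x
  proof -
    have "act (\<sigma>' \<circ> \<sigma>) x \<in> W" using act_in_V[OF permutes_compose[OF g(3) g'(3)] that] V_subset_W by blast
    then show ?thesis using k(2) g'(2) by (simp add: g g' H_act act_act)
  qed
  ultimately show ?thesis by blast
qed

lemma G_inverse:
  assumes "g \<in> G d"
  shows "\<exists>g'\<in>G d. \<forall>x\<in>V d. g' (g x) = x"
proof -
  obtain h \<sigma> where g: "g = h \<circ> act \<sigma>" "h \<in> H" "\<sigma> permutes {..<d}"
    using assms by (rule G_memE)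
  from H_inverse[OF g(2)] obtain h' where h': "h' \<in> H" "\<forall>x\<in>W. h' (h x) = x" ..
  have "h' \<circ> act (Hilbert_Choice.inv \<sigma>) \<in> G d" using h'(1) permutes_inv[OF g(3)] by (rule G_memI)
  moreover have "(h' \<circ> act (Hilbert_Choice.inv \<sigma>)) (g x) = x" if "x \<in> V d" for x
    using h'(2) that V_subset_W permutes_bij[OF g(3)]
    by (auto simp: g H_act[OF g(2)] act_inv_act)
  ultimately show ?thesis by blast
qed

lemma G_linear: "g \<in> G d \<Longrightarrow> lin_on (V d) g"
  unfolding G_def lin_on_def
proof (clarify)
  fix h \<sigma> x y a b assume h: "h \<in> H" and x: "x \<in> V d" and y: "y \<in> V d"
  have "act \<sigma> (lin_comb a x b y) = lin_comb a (act \<sigma> x) b (act \<sigma> y)"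
    by (simp add: act_def lin_comb_def fun_eq_iff)
  moreover have "act \<sigma> x \<in> W" "act \<sigma> y \<in> W"
    using x y V_subset_W comp_rmap_in_W unfolding act_def by blast+
  ultimately show "(h \<circ> act \<sigma>) (lin_comb a x b y) = lin_comb a ((h \<circ> act \<sigma>) x) b ((h \<circ> act \<sigma>) y)"
    using H_linear[OF h] unfolding lin_on_def by simp
qed

theorem consistent_seq_G:
  assumes finite_C: "\<And>d. finite (C d)"
    and V_C: "\<And>d x c. x \<in> V d \<Longrightarrow> c \<notin> C d \<Longrightarrow> x c = 0"
    and rmap_C: "\<And>d \<sigma>. \<sigma> permutes {..<d} \<Longrightarrow> bij_betw (rmap \<sigma>) (C d) (C d)"
    and C_mono: "\<And>d. C d \<subseteq> C (Suc d)"
    and H_isometry: "\<And>d h x y. h \<in> H \<Longrightarrow> x \<in> V d \<Longrightarrow> y \<in> V d \<Longrightarrow> ip (C d) (h x) (h y) = ip (C d) x y"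
    and \<gamma>: "\<And>d x. x \<in> V d \<Longrightarrow> \<gamma> d x = x"
  shows "consistent_seq C V G \<gamma>"
proof -
  have subspace: "\<forall>d. subspace_in (C d) (V d)"
    using finite_C V_C zero_in_W lin_comb_in_V unfolding subspace_in_def V_def by blast
  have group: "\<forall>d. (\<exists>e\<in>G d. \<forall>x\<in>V d. e x = x) \<and>
      (\<forall>g\<in>G d. \<forall>h\<in>G d. \<exists>k\<in>G d. \<forall>x\<in>V d. k x = g (h x)) \<and>
      (\<forall>g\<in>G d. \<exists>h\<in>G d. \<forall>x\<in>V d. h (g x) = x)"
    using G_unit G_comp G_inverse by blast
  have act_isometry: "ip (C d) (act \<sigma> x) (act \<sigma> y) = ip (C d) x y" if "\<sigma> permutes {..<d}" for \<sigma> d x y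
    unfolding ip_def act_apply using sum.reindex_bij_betw[OF rmap_C[OF that], of "\<lambda>c. x c * y c"] by simp
  have "ip (C d) (g x) (g y) = ip (C d) x y" if g: "g \<in> G d" and "x \<in> V d" "y \<in> V d" for g d x y
    using g
  proof (rule G_memE)
    fix h \<sigma> assume "g = h \<circ> act \<sigma>" "h \<in> H" "\<sigma> permutes {..<d}"
    then show ?thesis using H_isometry act_isometry act_in_V \<open>x \<in> V d\<close> \<open>y \<in> V d\<close> by simp
  qed
  then have G_orthogonal: "\<forall>d. \<forall>g\<in>G d. g ` V d \<subseteq> V d \<and> lin_on (V d) g \<and>
      (\<forall>x\<in>V d. \<forall>y\<in>V d. ip (C d) (g x) (g y) = ip (C d) x y)"
    using G_in_V G_linear by blast
  have "ip (C (Suc d)) x y = ip (C d) x y" if "x \<in> V d" for d x y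
    unfolding ip_def using finite_C C_mono V_C[OF that] by (intro sum.mono_neutral_right) auto
  then have \<gamma>_isometry: "\<forall>d. \<gamma> d ` V d \<subseteq> V (Suc d) \<and> lin_on (V d) (\<gamma> d) \<and>
      (\<forall>x\<in>V d. \<forall>y\<in>V d. ip (C (Suc d)) (\<gamma> d x) (\<gamma> d y) = ip (C d) x y)"
    using V_mono[of _ "Suc _"] \<gamma> lin_comb_in_V by (auto simp: lin_on_def)
  have "\<forall>d. \<forall>g\<in>G d. \<forall>x\<in>V d. \<gamma> d (g x) = g (\<gamma> d x)" using \<gamma> G_in_V by simp
  then show ?thesis unfolding consistent_seq_def using subspace G_mono group G_orthogonal \<gamma>_isometry by blast
qed

end

section \<open>The four examples\<close>

interpretation vectors: row_system "\<lambda>i::nat. {i}" "\<lambda>\<sigma>. \<sigma>" UNIV 1 "{id}"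
  by unfold_locales (auto simp: lin_on_def)

lemma example_vectors: "consistent_seq C1 V1 G1 \<gamma>1 \<and> stable_from V1 G1 \<gamma>1 m m"
proof -
  have V: "V1 = vectors.V" by (auto simp: V1_def vectors.V_def not_less)
  have "vectors.act \<sigma> = (\<lambda>x i. x (\<sigma> i))" for \<sigma> by (simp add: vectors.act_def fun_eq_iff)
  then have G: "G1 = vectors.G" by (simp add: fun_eq_iff G1_def vectors.G_trivial_H)
  have \<gamma>: "\<gamma>1 d x = x" if "x \<in> vectors.V d" for d x
    using that by (auto simp: \<gamma>1_def vectors.V_def fun_eq_iff not_less)
  have "consistent_seq C1 vectors.V vectors.G \<gamma>1"
  proof (rule vectors.consistent_seq_G)
    show "finite (C1 d)" "C1 d \<subseteq> C1 (Suc d)" for d by (auto simp: C1_def)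
  qed (use \<gamma> in \<open>auto simp: C1_def vectors.V_def permutes_imp_bij\<close>)
  moreover have "stable_from vectors.V vectors.G \<gamma>1 m m"
    using vectors.stable_from_G[of \<gamma>1 m m] \<gamma> by simp
  ultimately show ?thesis unfolding V G ..
qed

definition kcol_mats :: "nat \<Rightarrow> (nat \<times> nat \<Rightarrow> real) set" where
  "kcol_mats k = {X. \<forall>i j. k \<le> j \<longrightarrow> X (i, j) = 0}"

lemma V2_support: "X \<in> V2 k d \<Longrightarrow> c \<notin> C2 k d \<Longrightarrow> X c = 0"
  by (cases c) (auto simp: V2_def C2_def not_less)

lemma map_prod_bij_betw_C2: "\<sigma> permutes {..<d} \<Longrightarrow> bij_betw (map_prod \<sigma> id) (C2 k d) (C2 k d)"
  unfolding C2_def by (intro bij_betw_map_prod) (auto simp: permutes_imp_bij)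

lemma \<gamma>2_on_V2: "X \<in> V2 k d \<Longrightarrow> \<gamma>2 k d X = X"
  by (auto simp: \<gamma>2_def V2_def fun_eq_iff not_less)

interpretation row_mats: row_system "\<lambda>c::nat \<times> nat. {fst c}" "\<lambda>\<sigma>. map_prod \<sigma> id" "kcol_mats k" 1 "{id}"
  for k
  by unfold_locales (auto simp: kcol_mats_def lin_on_def lin_comb_def map_prod.comp map_prod.id)

lemma V2_eq: "V2 k = row_mats.V k"
  unfolding row_mats.V_def by (intro ext) (auto simp: V2_def kcol_mats_def not_less)

lemma example_row_matrices:
  "consistent_seq (C2 k) (V2 k) (G2 k) (\<gamma>2 k) \<and> stable_from (V2 k) (G2 k) (\<gamma>2 k) m m"
proof -
  have "row_mats.act \<sigma> = (\<lambda>X (i, j). X (\<sigma> i, j))" for \<sigma>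
    by (auto simp: row_mats.act_def fun_eq_iff)
  then have G: "G2 k = row_mats.G" by (simp add: fun_eq_iff G2_def row_mats.G_trivial_H)
  have \<gamma>: "\<gamma>2 k d X = X" if "X \<in> row_mats.V k d" for d X
    using that by (simp add: V2_eq[symmetric] \<gamma>2_on_V2)
  have "consistent_seq (C2 k) (row_mats.V k) row_mats.G (\<gamma>2 k)"
  proof (rule row_mats.consistent_seq_G)
    show "finite (C2 k d)" "C2 k d \<subseteq> C2 k (Suc d)" for d by (auto simp: C2_def)
  qed (auto simp: V2_eq[symmetric] V2_support map_prod_bij_betw_C2 \<gamma>2_on_V2)
  moreover have "stable_from (row_mats.V k) row_mats.G (\<gamma>2 k) m m"
    using row_mats.stable_from_G[of k "\<gamma>2 k" m m] \<gamma> by simp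
  ultimately show ?thesis unfolding V2_eq G ..
qed

definition sym_mats :: "(nat \<times> nat \<Rightarrow> real) set" where
  "sym_mats = {X. \<forall>i j. X (i, j) = X (j, i)}"

interpretation sym_mats: row_system "\<lambda>c::nat \<times> nat. {fst c, snd c}" "\<lambda>\<sigma>. map_prod \<sigma> \<sigma>" sym_mats 2 "{id}"
  by unfold_locales
    (auto simp: sym_mats_def lin_on_def lin_comb_def map_prod.comp map_prod.id card_insert_le_m1)

lemma example_symmetric_matrices:
  "consistent_seq C3 V3 G3 \<gamma>3 \<and> stable_from V3 G3 \<gamma>3 m (2 * m)"
proof -
  have V: "V3 = sym_mats.V"
    unfolding sym_mats.V_def by (intro ext) (auto simp: V3_def sym_mats_def not_less)
  have "sym_mats.act \<sigma> = (\<lambda>X (i, j). X (\<sigma> i, \<sigma> j))" for \<sigma>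
    by (auto simp: sym_mats.act_def fun_eq_iff)
  then have G: "G3 = sym_mats.G" by (simp add: fun_eq_iff G3_def sym_mats.G_trivial_H)
  have \<gamma>: "\<gamma>3 d X = X" if "X \<in> sym_mats.V d" for d X
    using that by (auto simp: V[symmetric] V3_def \<gamma>3_def fun_eq_iff not_less)
  have "consistent_seq C3 sym_mats.V sym_mats.G \<gamma>3"
  proof (rule sym_mats.consistent_seq_G)
    show "finite (C3 d)" "C3 d \<subseteq> C3 (Suc d)" for d by (auto simp: C3_def)
    show "X c = 0" if "X \<in> sym_mats.V d" "c \<notin> C3 d" for X c d
      using that by (cases c) (auto simp: V[symmetric] V3_def C3_def not_less)
    show "bij_betw (map_prod \<sigma> \<sigma>) (C3 d) (C3 d)" if "\<sigma> permutes {..<d}" for \<sigma> d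
      unfolding C3_def using that by (intro bij_betw_map_prod) (auto simp: permutes_imp_bij)
  qed (use \<gamma> in auto)
  moreover have "stable_from sym_mats.V sym_mats.G \<gamma>3 m (2 * m)"
    using sym_mats.stable_from_G[of \<gamma>3 m "2 * m"] \<gamma> by simp
  ultimately show ?thesis unfolding V G ..
qed

definition kmat_mult :: "nat \<Rightarrow> (nat \<times> nat \<Rightarrow> real) \<Rightarrow> (nat \<times> nat \<Rightarrow> real) \<Rightarrow> nat \<times> nat \<Rightarrow> real" where
  "kmat_mult k P Q = (\<lambda>(a, b). \<Sum>l<k. P (a, l) * Q (l, b))"

definition kmat_one :: "nat \<times> nat \<Rightarrow> real" where
  "kmat_one = (\<lambda>(a, b). if a = b then 1 else 0)"

definition kmat_transpose :: "(nat \<times> nat \<Rightarrow> real) \<Rightarrow> nat \<times> nat \<Rightarrow> real" where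
  "kmat_transpose Q = (\<lambda>(a, b). Q (b, a))"

definition right_mult :: "nat \<Rightarrow> (nat \<times> nat \<Rightarrow> real) \<Rightarrow> (nat \<times> nat \<Rightarrow> real) \<Rightarrow> nat \<times> nat \<Rightarrow> real" where
  "right_mult k Q X = (\<lambda>(i, j). if j < k then (\<Sum>l<k. X (i, l) * Q (l, j)) else 0)"

definition orth_right_mults :: "nat \<Rightarrow> ((nat \<times> nat \<Rightarrow> real) \<Rightarrow> nat \<times> nat \<Rightarrow> real) set" where
  "orth_right_mults k = {right_mult k Q | Q. orth k Q}"

lemma sum_rotate3: "(\<Sum>l\<in>A. \<Sum>s\<in>B. \<Sum>t\<in>C. f l s t) = (\<Sum>s\<in>B. \<Sum>t\<in>C. \<Sum>l\<in>A. f l s t)"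
  by (subst sum.swap) (rule sum.cong[OF refl], rule sum.swap)

lemma sum_kronecker:
  fixes f :: "nat \<Rightarrow> nat \<Rightarrow> real"
  shows "(\<Sum>s<k. \<Sum>t<k. f s t * (if s = t then 1 else 0)) = (\<Sum>s<k. f s s)"
  by (intro sum.cong refl) (simp add: if_distrib cong: if_cong)

lemma orth_rows:
  assumes "orth k Q" "a < k" "b < k"
  shows "(\<Sum>l<k. Q (a, l) * Q (b, l)) = (if a = b then 1 else 0)"
proof -
  define M where "M = mat k k (\<lambda>(i, j). Q (i, j))"
  have M: "M \<in> carrier_mat k k" "transpose_mat M \<in> carrier_mat k k" unfolding M_def by auto
  have "transpose_mat M * M = 1\<^sub>m k"
  proof (rule eq_matI)
    fix i j assume ij: "i < dim_row (1\<^sub>m k)" "j < dim_col (1\<^sub>m k)"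
    then have "(transpose_mat M * M) $$ (i, j) = (\<Sum>l<k. Q (l, i) * Q (l, j))"
      unfolding M_def by (simp add: scalar_prod_def atLeast0LessThan)
    also have "\<dots> = 1\<^sub>m k $$ (i, j)" using assms(1) ij unfolding orth_def by auto
    finally show "(transpose_mat M * M) $$ (i, j) = 1\<^sub>m k $$ (i, j)" .
  qed (auto simp: M_def)
  then have "M * transpose_mat M = 1\<^sub>m k" by (rule mat_mult_left_right_inverse[OF M(2,1)])
  then have "(M * transpose_mat M) $$ (a, b) = 1\<^sub>m k $$ (a, b)" by simp
  then show ?thesis using assms(2,3) unfolding M_def by (simp add: scalar_prod_def atLeast0LessThan)
qed

lemma orth_kmat_mult:
  assumes P: "orth k P" and Q: "orth k Q"
  shows "orth k (kmat_mult k P Q)"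
  unfolding orth_def
proof (intro allI impI)
  fix a b assume ab: "a < k" "b < k"
  have "(\<Sum>l<k. kmat_mult k P Q (l, a) * kmat_mult k P Q (l, b)) =
      (\<Sum>l<k. \<Sum>s<k. \<Sum>t<k. (Q (s, a) * Q (t, b)) * (P (l, s) * P (l, t)))"
    by (simp add: kmat_mult_def sum_product mult_ac)
  also have "\<dots> = (\<Sum>s<k. \<Sum>t<k. \<Sum>l<k. (Q (s, a) * Q (t, b)) * (P (l, s) * P (l, t)))"
    by (rule sum_rotate3)
  also have "\<dots> = (\<Sum>s<k. \<Sum>t<k. (Q (s, a) * Q (t, b)) * (if s = t then 1 else 0))"
    using P unfolding orth_def by (intro sum.cong refl) (simp add: sum_distrib_left[symmetric])
  also have "\<dots> = (\<Sum>s<k. Q (s, a) * Q (s, b))" by (rule sum_kronecker)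
  also have "\<dots> = (if a = b then 1 else 0)" using Q ab unfolding orth_def by simp
  finally show "(\<Sum>l<k. kmat_mult k P Q (l, a) * kmat_mult k P Q (l, b)) = (if a = b then 1 else 0)" .
qed

lemma orth_kmat_one: "orth k kmat_one"
  unfolding orth_def
proof (intro allI impI)
  fix a b assume "a < k" "b < k"
  have "(\<Sum>l<k. kmat_one (l, a) * kmat_one (l, b)) = (\<Sum>l<k. if l = a then kmat_one (a, b) else 0)"
    by (intro sum.cong) (auto simp: kmat_one_def)
  then show "(\<Sum>l<k. kmat_one (l, a) * kmat_one (l, b)) = (if a = b then 1 else 0)"
    using \<open>a < k\<close> by (simp add: kmat_one_def)
qed

lemma orth_kmat_transpose: "orth k Q \<Longrightarrow> orth k (kmat_transpose Q)"
  using orth_rows unfolding orth_def by (simp add: kmat_transpose_def)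

lemma right_mult_right_mult: "right_mult k Q (right_mult k P X) = right_mult k (kmat_mult k P Q) X"
proof (intro ext, clarify)
  fix i j
  have "(\<Sum>l<k. right_mult k P X (i, l) * Q (l, j)) = (\<Sum>l<k. (\<Sum>l'<k. X (i, l') * P (l', l)) * Q (l, j))"
    by (intro sum.cong) (auto simp: right_mult_def)
  also have "\<dots> = (\<Sum>l<k. \<Sum>l'<k. X (i, l') * (P (l', l) * Q (l, j)))"
    by (simp add: sum_distrib_right mult.assoc)
  also have "\<dots> = (\<Sum>l'<k. X (i, l') * kmat_mult k P Q (l', j))"
    by (subst sum.swap) (simp add: kmat_mult_def sum_distrib_left)
  finally show "right_mult k Q (right_mult k P X) (i, j) = right_mult k (kmat_mult k P Q) X (i, j)"
    by (simp add: right_mult_def)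
qed

lemma right_mult_kmat_one: "X \<in> kcol_mats k \<Longrightarrow> right_mult k kmat_one X = X"
  by (auto simp: right_mult_def kmat_one_def kcol_mats_def fun_eq_iff not_less if_distrib cong: if_cong)

lemma right_mult_cong: "(\<And>a b. a < k \<Longrightarrow> b < k \<Longrightarrow> P (a, b) = Q (a, b)) \<Longrightarrow> right_mult k P = right_mult k Q"
  unfolding right_mult_def by (intro ext) (auto intro!: sum.cong)

lemma right_mult_kmat_transpose:
  assumes "orth k Q" "X \<in> kcol_mats k"
  shows "right_mult k (kmat_transpose Q) (right_mult k Q X) = X"
proof -
  have "right_mult k (kmat_mult k Q (kmat_transpose Q)) = right_mult k kmat_one"
    using orth_rows[OF assms(1)] by (intro right_mult_cong) (simp add: kmat_mult_def kmat_transpose_def kmat_one_def)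
  then show ?thesis using assms(2) by (simp add: right_mult_right_mult right_mult_kmat_one)
qed

lemma ip_C2: "ip (C2 k d) X Y = (\<Sum>i<d. \<Sum>j<k. X (i, j) * Y (i, j))"
  unfolding ip_def C2_def by (simp add: sum.cartesian_product)

lemma right_mult_isometry:
  assumes Q: "orth k Q"
  shows "ip (C2 k d) (right_mult k Q X) (right_mult k Q Y) = ip (C2 k d) X Y"
  unfolding ip_C2
proof (rule sum.cong[OF refl])
  fix i
  have "(\<Sum>j<k. right_mult k Q X (i, j) * right_mult k Q Y (i, j)) =
      (\<Sum>j<k. \<Sum>l<k. \<Sum>t<k. (X (i, l) * Y (i, t)) * (Q (l, j) * Q (t, j)))"
    by (simp add: right_mult_def sum_product mult_ac)
  also have "\<dots> = (\<Sum>l<k. \<Sum>t<k. \<Sum>j<k. (X (i, l) * Y (i, t)) * (Q (l, j) * Q (t, j)))"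
    by (rule sum_rotate3)
  also have "\<dots> = (\<Sum>l<k. \<Sum>t<k. (X (i, l) * Y (i, t)) * (if l = t then 1 else 0))"
    using orth_rows[OF Q] by (intro sum.cong refl) (simp add: sum_distrib_left[symmetric])
  also have "\<dots> = (\<Sum>j<k. X (i, j) * Y (i, j))" by (rule sum_kronecker)
  finally show "(\<Sum>j<k. right_mult k Q X (i, j) * right_mult k Q Y (i, j)) = (\<Sum>j<k. X (i, j) * Y (i, j))" .
qed

lemma orth_right_multsI: "orth k Q \<Longrightarrow> right_mult k Q \<in> orth_right_mults k"
  unfolding orth_right_mults_def by blast

lemma orth_right_multsE:
  assumes "g \<in> orth_right_mults k"
  obtains Q where "g = right_mult k Q" "orth k Q"
  using assms unfolding orth_right_mults_def by blast

lemma orth_right_mults_unit: "\<exists>e\<in>orth_right_mults k. \<forall>X\<in>kcol_mats k. e X = X"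
proof (rule bexI)
  show "\<forall>X\<in>kcol_mats k. right_mult k kmat_one X = X" using right_mult_kmat_one by blast
qed (rule orth_right_multsI[OF orth_kmat_one])

lemma orth_right_mults_comp:
  assumes "g \<in> orth_right_mults k" "h \<in> orth_right_mults k"
  shows "\<exists>f\<in>orth_right_mults k. \<forall>X\<in>kcol_mats k. f X = g (h X)"
proof -
  obtain Q where g: "g = right_mult k Q" "orth k Q" using assms(1) by (rule orth_right_multsE)
  obtain P where h: "h = right_mult k P" "orth k P" using assms(2) by (rule orth_right_multsE)
  have "right_mult k (kmat_mult k P Q) \<in> orth_right_mults k"
    using orth_kmat_mult[OF h(2) g(2)] by (rule orth_right_multsI)
  then show ?thesis by (rule bexI[rotated]) (simp add: g h right_mult_right_mult)
qed

lemma orth_right_mults_inverse: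
  assumes "g \<in> orth_right_mults k"
  shows "\<exists>h\<in>orth_right_mults k. \<forall>X\<in>kcol_mats k. h (g X) = X"
proof -
  obtain Q where g: "g = right_mult k Q" "orth k Q" using assms by (rule orth_right_multsE)
  have "right_mult k (kmat_transpose Q) \<in> orth_right_mults k"
    using orth_kmat_transpose[OF g(2)] by (rule orth_right_multsI)
  then show ?thesis by (rule bexI[rotated]) (simp add: g right_mult_kmat_transpose)
qed

interpretation orth_mats: row_system "\<lambda>c::nat \<times> nat. {fst c}" "\<lambda>\<sigma>. map_prod \<sigma> id" "kcol_mats k" 1
    "orth_right_mults k"
  for k
proof unfold_locales
  show "\<exists>e\<in>orth_right_mults k. \<forall>x\<in>kcol_mats k. e x = x" by (rule orth_right_mults_unit)
  show "\<exists>f\<in>orth_right_mults k. \<forall>x\<in>kcol_mats k. f x = g (h x)"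
    if "g \<in> orth_right_mults k" "h \<in> orth_right_mults k" for g h
    using that by (rule orth_right_mults_comp)
  show "\<exists>h\<in>orth_right_mults k. \<forall>x\<in>kcol_mats k. h (g x) = x" if "g \<in> orth_right_mults k" for g
    using that by (rule orth_right_mults_inverse)
qed (auto simp: kcol_mats_def orth_right_mults_def right_mult_def lin_on_def lin_comb_def fun_eq_iff
    map_prod.comp map_prod.id sum.distrib sum_distrib_left algebra_simps)

lemma example_row_matrices_orthogonal:
  "consistent_seq (C2 k) (V2 k) (G4 k) (\<gamma>2 k) \<and> stable_from (V2 k) (G4 k) (\<gamma>2 k) m (2 * m)"
proof -
  have V: "V2 k = orth_mats.V k"
    unfolding orth_mats.V_def by (intro ext) (auto simp: V2_def kcol_mats_def not_less)
  have generator: "(\<lambda>X (i, j). if j < k then \<Sum>l<k. X (\<sigma> i, l) * Q (l, j) else 0) =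
      right_mult k Q \<circ> orth_mats.act \<sigma>" for \<sigma> Q
    by (auto simp: fun_eq_iff right_mult_def orth_mats.act_def)
  have "G4 k d = orth_mats.G k d" for d
  proof (intro equalityI subsetI)
    fix g assume "g \<in> G4 k d"
    then obtain \<sigma> Q where "g = right_mult k Q \<circ> orth_mats.act \<sigma>" "\<sigma> permutes {..<d}" "orth k Q"
      unfolding G4_def generator by blast
    then show "g \<in> orth_mats.G k d" by (simp add: orth_mats.G_memI orth_right_multsI)
  next
    fix g assume "g \<in> orth_mats.G k d"
    then obtain h \<sigma> where g: "g = h \<circ> orth_mats.act \<sigma>" "h \<in> orth_right_mults k" "\<sigma> permutes {..<d}"
      by (rule orth_mats.G_memE)
    then obtain Q where "h = right_mult k Q" "orth k Q" by (auto elim: orth_right_multsE)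
    then show "g \<in> G4 k d" unfolding G4_def generator using g by blast
  qed
  then have G: "G4 k = orth_mats.G k" ..
  have \<gamma>: "\<gamma>2 k d X = X" if "X \<in> orth_mats.V k d" for d X
    using that by (simp add: V[symmetric] \<gamma>2_on_V2)
  have "consistent_seq (C2 k) (orth_mats.V k) (orth_mats.G k) (\<gamma>2 k)"
  proof (rule orth_mats.consistent_seq_G)
    show "finite (C2 k d)" "C2 k d \<subseteq> C2 k (Suc d)" for d by (auto simp: C2_def)
    show "ip (C2 k d) (h X) (h Y) = ip (C2 k d) X Y" if "h \<in> orth_right_mults k" for d h X Y
      using that by (auto elim: orth_right_multsE simp: right_mult_isometry)
  qed (auto simp: V[symmetric] V2_support map_prod_bij_betw_C2 \<gamma>2_on_V2)
  moreover have "stable_from (orth_mats.V k) (orth_mats.G k) (\<gamma>2 k) m (2 * m)"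
    using orth_mats.stable_from_G[of k "\<gamma>2 k" m "2 * m"] \<gamma> by simp
  ultimately show ?thesis unfolding V G ..
qed

theorem theorem5p1:
  fixes k m :: nat
  shows "consistent_seq C1 V1 G1 \<gamma>1 \<and> stable_from V1 G1 \<gamma>1 m m
       \<and> consistent_seq (C2 k) (V2 k) (G2 k) (\<gamma>2 k) \<and> stable_from (V2 k) (G2 k) (\<gamma>2 k) m m
       \<and> consistent_seq C3 V3 G3 \<gamma>3 \<and> stable_from V3 G3 \<gamma>3 m (2 * m)
       \<and> consistent_seq (C2 k) (V2 k) (G4 k) (\<gamma>2 k) \<and> stable_from (V2 k) (G4 k) (\<gamma>2 k) m (2 * m)"
  using example_vectors example_row_matrices example_symmetric_matrices example_row_matrices_orthogonal by blast

end
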